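(* In the SLAR setting, if $(\delta_u,u)$ and $(\delta_v,v)$ are both Nash equilibria of the SLAR game, then $u=v$.
   Context: SLAR setting: $(x,y)$ is drawn from a distribution $\mathcal D$ on $\mathbb R^d\times\{-1,+1\}$, $x=(x_1,\dots,x_d)$ with finite second moments, such that (A1) for each $i$ there is a constant $\mu_i$ with $\mathbb E[x_i\mid y]=y\mu_i$ for $y\in\{-1,1\}$, and (A2) the coordinates $x_1,\dots,x_d$ are mutually independent conditionally on $y$. Fix $\lambda>0$ and a perturbation budget $\varepsilon>0$; $\mathcal B(\varepsilon)=\{a\in\mathbb R^d:\|a\|_\infty\le\varepsilon\}$. A perturbation function is a measurable map $\delta$ assigning to each $(x,y)$ a vector $\delta(x,y)\in\mathcal B(\varepsilon)$. For a perturbation function $\delta$ and $w\in\mathbb R^d$ let $U(\delta,w)=\mathbb E_{(x,y)\sim\mathcal D}[\max(0,1-yw^\top(x+\delta(x,y)))]+\frac{\lambda}{2}\|w\|_2^2$. SLAR game: the adversary chooses a perturbation function $\delta$, the defender chooses $w\in\mathbb R^d$; the adversary's payoff is $U(\delta,w)$ and the defender's is $-U(\delta,w)$. A pair $(\delta^*,w^* )$ is a (pure) Nash equilibrium if $\sup_\delta U(\delta,w^* )\le U(\delta^*,w^* )\le\inf_{w\in\mathbb R^d}U(\delta^*,w)$, the supremum over all perturbation functions. *)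

theory Defs
  imports "HOL-Probability.Probability"
begin

text \<open>The data distribution D on R^d x {-1,+1}: a probability measure on the Borel sets of
  (real^'n) x real, concentrated on labels in {-1,1}, with finite second moments,
  (A1) E[x_i | y] = y mu_i, and (A2) conditional independence of the coordinates given y.\<close>

definition slar_dist :: "((real^'n) \<times> real) measure \<Rightarrow> bool" where
  "slar_dist M \<longleftrightarrow>
     prob_space M \<and> sets M = sets borel \<and>
     (AE p in M. snd p \<in> {-1, 1}) \<and>
     (\<forall>i. integrable M (\<lambda>p. (fst p $ i)\<^sup>2)) \<and>
     (\<exists>\<mu>::'n \<Rightarrow> real. \<forall>i. \<forall>c\<in>{-1, 1::real}.
         (\<integral>p. fst p $ i * indicator {q. snd q = c} p \<partial>M)
           = c * \<mu> i * measure M {p \<in> space M. snd p = c}) \<and>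
     (\<forall>c\<in>{-1, 1::real}. measure M {p \<in> space M. snd p = c} > 0 \<longrightarrow>
         prob_space.indep_vars (uniform_measure M {p \<in> space M. snd p = c})
           (\<lambda>_. borel) (\<lambda>i p. fst p $ i) UNIV)"

definition perturbation :: "real \<Rightarrow> ((real^'n) \<times> real \<Rightarrow> real^'n) \<Rightarrow> bool" where
  "perturbation \<epsilon> \<delta> \<longleftrightarrow>
     \<delta> \<in> borel_measurable (borel :: ((real^'n) \<times> real) measure) \<and>
     (\<forall>p i. \<bar>\<delta> p $ i\<bar> \<le> \<epsilon>)"

definition slar_U :: "((real^'n) \<times> real) measure \<Rightarrow> real \<Rightarrow>
    ((real^'n) \<times> real \<Rightarrow> real^'n) \<Rightarrow> real^'n \<Rightarrow> real" where
  "slar_U M lam \<delta> w =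
     (\<integral>p. max 0 (1 - snd p * (w \<bullet> (fst p + \<delta> p))) \<partial>M) + lam / 2 * (norm w)\<^sup>2"

definition slar_nash :: "((real^'n) \<times> real) measure \<Rightarrow> real \<Rightarrow> real \<Rightarrow>
    ((real^'n) \<times> real \<Rightarrow> real^'n) \<Rightarrow> real^'n \<Rightarrow> bool" where
  "slar_nash M lam \<epsilon> \<delta>s ws \<longleftrightarrow>
     perturbation \<epsilon> \<delta>s \<and>
     (\<forall>\<delta>. perturbation \<epsilon> \<delta> \<longrightarrow> slar_U M lam \<delta> ws \<le> slar_U M lam \<delta>s ws) \<and>
     (\<forall>w. slar_U M lam \<delta>s ws \<le> slar_U M lam \<delta>s w)"

end

theory Submission
  imports Defs
begin

text \<open>For every fixed perturbation the defender's loss is \<open>\<lambda>\<close>-strongly convex: the hinge term is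
  convex in \<open>w\<close> and the regulariser satisfies the parallelogram law, so the loss at the midpoint
  of \<open>u\<close> and \<open>v\<close> lies \<open>\<lambda>/8 \<parallel>u - v\<parallel>\<^sup>2\<close> below the average of the losses at \<open>u\<close> and \<open>v\<close>.
  Given two equilibria \<open>(\<delta>\<^sub>u, u)\<close> and \<open>(\<delta>\<^sub>v, v)\<close>, each defender is optimal against its own
  adversary and each adversary gains nothing by switching to the other's perturbation; adding
  the resulting four inequalities to the two strong-convexity bounds at the midpoint leaves
  \<open>\<lambda>/4 \<parallel>u - v\<parallel>\<^sup>2 \<le> 0\<close>.\<close>

lemma norm_midpoint_squared:
  fixes u v :: "'a::real_inner"
  shows "(norm (midpoint u v))\<^sup>2 = ((norm u)\<^sup>2 + (norm v)\<^sup>2) / 2 - (norm (u - v))\<^sup>2 / 4"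
  unfolding power2_norm_eq_inner midpoint_def
  by (simp add: inner_add_left inner_add_right inner_diff_left inner_diff_right inner_commute
      field_simps)

lemma hinge_midpoint_le:
  fixes u v z :: "'a::real_inner"
  shows "max 0 (1 - y * (midpoint u v \<bullet> z))
    \<le> (max 0 (1 - y * (u \<bullet> z)) + max 0 (1 - y * (v \<bullet> z))) / 2"
proof -
  have "1 - y * (midpoint u v \<bullet> z) = ((1 - y * (u \<bullet> z)) + (1 - y * (v \<bullet> z))) / 2"
    by (simp add: midpoint_def inner_add_left field_simps)
  then show ?thesis by (simp add: max_def)
qed

lemma abs_inner_perturbation_le:
  assumes "perturbation \<epsilon> \<delta>"
  shows "\<bar>w \<bullet> \<delta> p\<bar> \<le> \<epsilon> * (\<Sum>i\<in>UNIV. \<bar>w $ i\<bar>)"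
proof -
  have bound: "\<bar>\<delta> p $ i\<bar> \<le> \<epsilon>" for i
    using assms unfolding perturbation_def by blast
  have "\<bar>w \<bullet> \<delta> p\<bar> \<le> (\<Sum>i\<in>UNIV. \<bar>w $ i\<bar> * \<bar>\<delta> p $ i\<bar>)"
    unfolding inner_vec_def by (rule order_trans[OF sum_abs]) (simp add: abs_mult)
  also have "\<dots> \<le> (\<Sum>i\<in>UNIV. \<bar>w $ i\<bar> * \<epsilon>)"
    by (intro sum_mono mult_left_mono bound) simp
  finally show ?thesis by (simp add: sum_distrib_left mult.commute)
qed

lemma integrable_label_times:
  fixes M :: "('a \<times> real) measure" and f :: "'a \<times> real \<Rightarrow> real"
  assumes "integrable M f" and "snd \<in> borel_measurable M" and "AE p in M. \<bar>snd p\<bar> \<le> 1"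
  shows "integrable M (\<lambda>p. snd p * f p)"
proof (rule Bochner_Integration.integrable_bound[of M "\<lambda>p. \<bar>f p\<bar>"])
  show "AE p in M. norm (snd p * f p) \<le> norm \<bar>f p\<bar>"
    using assms(3) by eventually_elim (simp add: abs_mult mult_left_le_one_le)
qed (use assms in auto)

lemma hinge_integrable:
  assumes D: "slar_dist M" and P: "perturbation \<epsilon> \<delta>"
  shows "integrable M (\<lambda>p. max 0 (1 - snd p * (w \<bullet> (fst p + \<delta> p))))"
proof -
  interpret prob_space M using D unfolding slar_dist_def by auto
  have sets_M: "sets M = sets borel" using D unfolding slar_dist_def by auto
  note measurable_M = measurable_cong_sets[OF sets_M refl]
  have fst_meas[measurable]: "fst \<in> borel_measurable M"
    and snd_meas[measurable]: "snd \<in> borel_measurable M"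
    unfolding measurable_M by (intro borel_measurable_continuous_onI continuous_intros)+
  have \<delta>_meas[measurable]: "\<delta> \<in> borel_measurable M"
    using P unfolding perturbation_def measurable_M by simp
  have "AE p in M. snd p \<in> {-1, 1}"
    using D unfolding slar_dist_def by blast
  then have label_bounded: "AE p in M. \<bar>snd p\<bar> \<le> 1"
    by eventually_elim auto
  have coordinate: "integrable M (\<lambda>p. fst p $ i)" for i
  proof (rule square_integrable_imp_integrable)
    show "integrable M (\<lambda>p. (fst p $ i)\<^sup>2)"
      using D unfolding slar_dist_def by blast
    show "(\<lambda>p. fst p $ i) \<in> borel_measurable M"
      unfolding measurable_M by (intro borel_measurable_continuous_onI continuous_intros)
  qed
  have "integrable M (\<lambda>p. snd p * (w \<bullet> fst p))"
    unfolding inner_vec_def inner_real_def sum_distrib_left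
    by (intro Bochner_Integration.integrable_sum integrable_label_times integrable_mult_right
        coordinate label_bounded snd_meas)
  moreover have "integrable M (\<lambda>p. snd p * (w \<bullet> \<delta> p))"
  proof (rule integrable_const_bound)
    show "AE p in M. norm (snd p * (w \<bullet> \<delta> p)) \<le> \<epsilon> * (\<Sum>i\<in>UNIV. \<bar>w $ i\<bar>)"
      using label_bounded
    proof eventually_elim
      case (elim p)
      then have "\<bar>snd p * (w \<bullet> \<delta> p)\<bar> \<le> \<bar>w \<bullet> \<delta> p\<bar>"
        by (simp add: abs_mult mult_left_le_one_le)
      with abs_inner_perturbation_le[OF P] show ?case by (simp add: order_trans)
    qed
  qed simp
  ultimately show ?thesis
    unfolding inner_add_right distrib_left diff_add_eq_diff_diff_swap
    by (intro integrable_max Bochner_Integration.integrable_diff) simp_all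
qed

lemma slar_U_midpoint_le:
  assumes D: "slar_dist M" and P: "perturbation \<epsilon> \<delta>"
  shows "slar_U M lam \<delta> (midpoint u v)
    \<le> (slar_U M lam \<delta> u + slar_U M lam \<delta> v) / 2 - lam / 8 * (norm (u - v))\<^sup>2"
proof -
  let ?h = "\<lambda>w p. max 0 (1 - snd p * (w \<bullet> (fst p + \<delta> p)))"
  have integrable: "integrable M (?h w)" for w
    by (rule hinge_integrable[OF D P])
  have "(\<integral>p. ?h (midpoint u v) p \<partial>M) \<le> (\<integral>p. (?h u p + ?h v p) / 2 \<partial>M)"
    by (intro integral_mono integrable Bochner_Integration.integrable_add integrable_divide
        hinge_midpoint_le)
  also have "\<dots> = ((\<integral>p. ?h u p \<partial>M) + (\<integral>p. ?h v p \<partial>M)) / 2"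
    using integrable by simp
  finally show ?thesis
    unfolding slar_U_def norm_midpoint_squared by (simp add: field_simps)
qed

lemma saddle_points_eq_if_midpoint_strongly_convex:
  fixes f :: "'d \<Rightarrow> 'a::real_inner \<Rightarrow> real"
  assumes convex: "\<And>d u v. d \<in> A \<Longrightarrow> f d (midpoint u v) \<le> (f d u + f d v) / 2 - c * (norm (u - v))\<^sup>2"
    and "c > 0" and "du \<in> A" and "dv \<in> A"
    and switch_u: "f dv u \<le> f du u" and switch_v: "f du v \<le> f dv v"
    and best_u: "\<And>w. f du u \<le> f du w" and best_v: "\<And>w. f dv v \<le> f dv w"
  shows "u = v"
proof -
  have "c * (norm (u - v))\<^sup>2 \<le> 0"
    using convex[OF \<open>du \<in> A\<close>, of u v] convex[OF \<open>dv \<in> A\<close>, of u v]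
      switch_u switch_v best_u[of "midpoint u v"] best_v[of "midpoint u v"] by argo
  with \<open>c > 0\<close> show ?thesis
    by (simp add: mult_le_0_iff)
qed

theorem mainTheorem15:
  fixes M :: "((real^'n) \<times> real) measure"
    and lam \<epsilon> :: real
    and \<delta>u \<delta>v :: "(real^'n) \<times> real \<Rightarrow> real^'n"
    and u v :: "real^'n"
  assumes "slar_dist M" and "lam > 0" and "\<epsilon> > 0"
    and "slar_nash M lam \<epsilon> \<delta>u u" and "slar_nash M lam \<epsilon> \<delta>v v"
  shows "u = v"
proof (rule saddle_points_eq_if_midpoint_strongly_convex[where du = \<delta>u and dv = \<delta>v])
  show "slar_U M lam \<delta> (midpoint u v) \<le> (slar_U M lam \<delta> u + slar_U M lam \<delta> v) / 2
      - lam / 8 * (norm (u - v))\<^sup>2" if "\<delta> \<in> Collect (perturbation \<epsilon>)" for \<delta> u v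
    using slar_U_midpoint_le[OF \<open>slar_dist M\<close>] that by simp
qed (use assms in \<open>auto simp: slar_nash_def\<close>)

end
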